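(* Let $\nu$ be a measure on $\mathbb{R}^d$ with $\nu(\{0\})=0$. Then $\Upsilon_{-2,2}(\nu)$ is definable if and only if $\nu\in\mathfrak{M}_L(\mathbb{R}^d)$. Moreover, the mapping $\Upsilon_{-2,2}$ is one-to-one on $\mathfrak{M}_L(\mathbb{R}^d)$.
   Context: $\mathfrak{M}_L(\mathbb{R}^d)$ is the class of Lévy measures, i.e. measures $\nu$ with $\nu(\{0\})=0$ and $\int(1\wedge|x|^2)\nu(\mathrm{d}x)<\infty$. For a measure $\nu$ on $\mathbb{R}^d$ with $\nu(\{0\})=0$, $\Upsilon_{-2,2}(\nu)(B)=\int_0^\infty\nu(s^{-1}B)\,2se^{-s^2}\mathrm{d}s$ for Borel $B$ (with $s^{-1}B=\{s^{-1}x:x\in B\}$); $\Upsilon_{-2,2}(\nu)$ is called definable when this right-hand side is a measure in $\mathfrak{M}_L(\mathbb{R}^d)$. *)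

theory Defs
  imports "HOL-Analysis.Analysis"
begin

definition levy_measure :: "'a::euclidean_space measure \<Rightarrow> bool" where
  "levy_measure \<nu> \<longleftrightarrow> sets \<nu> = sets borel \<and> emeasure \<nu> {0} = 0 \<and>
     (\<integral>\<^sup>+ x. ennreal (min 1 ((norm x)\<^sup>2)) \<partial>\<nu>) < \<infinity>"

definition upsilon :: "'a::euclidean_space measure \<Rightarrow> 'a set \<Rightarrow> ennreal" where
  "upsilon \<nu> B = (\<integral>\<^sup>+ s. indicator {0<..} s *
      emeasure \<nu> ((\<lambda>x. inverse s *\<^sub>R x) ` B) * ennreal (2 * s * exp (- (s\<^sup>2))) \<partial>lborel)"

definition upsilon_definable :: "'a::euclidean_space measure \<Rightarrow> bool" where
  "upsilon_definable \<nu> \<longleftrightarrow>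
     (\<exists>\<mu>. levy_measure \<mu> \<and> (\<forall>B\<in>sets borel. emeasure \<mu> B = upsilon \<nu> B))"

end

theory Submission
  imports Defs "HOL-Probability.Distribution_Functions" "HOL-Real_Asymp.Real_Asymp"
begin

text \<open>
  Let rho(s) = 2 s exp(-s^2) for s > 0. By Tonelli, for sigma-finite nu the set function
  Upsilon(nu) is the measure with  int f dUpsilon(nu) = int int rho(s) f(s x) ds nu(dx).
  Since min(1, |s x|^2) <= (1 + s^2) min(1, |x|^2) with int rho(s) (1 + s^2) ds = 2, and
  min(1, |x|^2) <= min(1, |s x|^2) for s > 1 with int_{s > 1} rho = 1/e, the integral of
  min(1, |y|^2) against Upsilon(nu) lies between 1/e and 2 times that against nu. If
  Upsilon(nu) is a Levy measure, its mass outside the unit ball bounds every tail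
  nu{|x| > r}, so nu is sigma-finite and the bounds above apply.

  For injectivity, Upsilon(nu)(C_D \<inter> {|y| > r}) = int_{C_D} exp(-r^2/|x|^2) nu(dx) for the
  cone C_D over a Borel set D of directions. For r^2 = k + 1 these are the moments of the
  image of w nu|C_D under w, where w(x) = exp(-1/|x|^2): a finite measure on [0, 1], hence
  determined by its moments (Weierstrass). Thus Upsilon(nu) determines the image of w nu under
  x \<mapsto> (w(x), x/|x|), a map invertible on x \<noteq> 0, and this image determines nu.
\<close>

section \<open>Upsilon as a measure\<close>

definition upsilon_weight :: "real \<Rightarrow> ennreal" where
  "upsilon_weight s = indicator {0<..} s * ennreal (2 * s * exp (- (s\<^sup>2)))"

lemma upsilon_weight_measurable [measurable]: "upsilon_weight \<in> borel_measurable borel"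
  unfolding upsilon_weight_def by measurable

lemma nn_integral_upsilon_weight_tail:
  fixes a :: real
  assumes "0 \<le> a"
  shows "(\<integral>\<^sup>+ s. upsilon_weight s * indicator {a<..} s \<partial>lborel) = ennreal (exp (- (a\<^sup>2)))"
proof -
  have "(\<integral>\<^sup>+ s. upsilon_weight s * indicator {a<..} s \<partial>lborel) =
        (\<integral>\<^sup>+ s. ennreal (2 * s * exp (- (s\<^sup>2))) * indicator {a..} s \<partial>lborel)"
    by (rule nn_integral_cong_AE[OF eventually_mono[OF AE_lborel_singleton[of a]]])
      (use assms in \<open>auto simp: upsilon_weight_def split: split_indicator\<close>)
  also have "\<dots> = ennreal (0 - (- exp (- (a\<^sup>2))))"
  proof (rule nn_integral_FTC_atLeast)
    show "((\<lambda>s::real. - exp (- (s\<^sup>2))) \<longlongrightarrow> 0) at_top" by real_asymp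
    fix s :: real assume "a \<le> s"
    then show "0 \<le> 2 * s * exp (- (s\<^sup>2))" using assms by auto
    show "((\<lambda>s. - exp (- (s\<^sup>2))) has_real_derivative 2 * s * exp (- (s\<^sup>2))) (at s)"
      by (auto intro!: derivative_eq_intros simp: power2_eq_square)
  qed measurable
  finally show ?thesis by simp
qed

lemma nn_integral_upsilon_weight_second_moment:
  "(\<integral>\<^sup>+ s. upsilon_weight s * ennreal (1 + s\<^sup>2) \<partial>lborel) = 2"
proof -
  have "(\<integral>\<^sup>+ s. upsilon_weight s * ennreal (1 + s\<^sup>2) \<partial>lborel) =
        (\<integral>\<^sup>+ s. ennreal (2 * s * exp (- (s\<^sup>2)) * (1 + s\<^sup>2)) * indicator {0..} s \<partial>lborel)"
    by (rule nn_integral_cong)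
      (auto simp: upsilon_weight_def ennreal_mult[symmetric] simp del: ennreal_plus
        split: split_indicator)
  also have "\<dots> = ennreal (0 - (- (2 + 0\<^sup>2) * exp (- (0\<^sup>2))))"
  proof (rule nn_integral_FTC_atLeast)
    show "((\<lambda>s::real. - (2 + s\<^sup>2) * exp (- (s\<^sup>2))) \<longlongrightarrow> 0) at_top" by real_asymp
    fix s :: real assume "0 \<le> s"
    then show "0 \<le> 2 * s * exp (- (s\<^sup>2)) * (1 + s\<^sup>2)" by auto
    show "((\<lambda>s. - (2 + s\<^sup>2) * exp (- (s\<^sup>2))) has_real_derivative 2 * s * exp (- (s\<^sup>2)) * (1 + s\<^sup>2)) (at s)"
      by (auto intro!: derivative_eq_intros simp: power2_eq_square algebra_simps)
  qed measurable
  finally show ?thesis by simp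
qed

lemma scaleR_inverse_image_eq_vimage:
  fixes B :: "'a::real_vector set"
  assumes "s \<noteq> 0"
  shows "(\<lambda>x. inverse s *\<^sub>R x) ` B = (\<lambda>x. s *\<^sub>R x) -` B"
  using assms by (auto simp: image_iff intro!: bexI[where x = "s *\<^sub>R _"])

lemma upsilon_integrand_eq_nn_integral:
  fixes \<nu> :: "'a::euclidean_space measure"
  assumes sets: "sets \<nu> = sets borel" and B: "B \<in> sets borel"
  shows "indicator {0<..} s * emeasure \<nu> ((\<lambda>x. inverse s *\<^sub>R x) ` B) * ennreal (2 * s * exp (- s\<^sup>2)) =
      (\<integral>\<^sup>+ x. upsilon_weight s * indicator B (s *\<^sub>R x) \<partial>\<nu>)"
proof (cases "0 < s")
  case True
  have vimage: "(\<lambda>x. s *\<^sub>R x) -` B \<in> sets \<nu>"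
    unfolding sets by (rule measurable_sets_borel[OF _ B]) measurable
  have "(\<integral>\<^sup>+ x. upsilon_weight s * indicator B (s *\<^sub>R x) \<partial>\<nu>) =
      upsilon_weight s * emeasure \<nu> ((\<lambda>x. s *\<^sub>R x) -` B)"
    using nn_integral_cmult_indicator[OF vimage, of "upsilon_weight s"] by (simp add: indicator_vimage)
  also have "\<dots> = upsilon_weight s * emeasure \<nu> ((\<lambda>x. inverse s *\<^sub>R x) ` B)"
    using True by (simp add: scaleR_inverse_image_eq_vimage)
  finally show ?thesis
    using True by (simp add: upsilon_weight_def mult.commute)
qed (simp add: upsilon_weight_def)

lemma nn_integral_distr_density:
  assumes [measurable]: "f \<in> borel_measurable M" "g \<in> M \<rightarrow>\<^sub>M N" "h \<in> borel_measurable N"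
  shows "(\<integral>\<^sup>+ y. h y \<partial>distr (density M f) N g) = (\<integral>\<^sup>+ x. f x * h (g x) \<partial>M)"
  by (simp add: nn_integral_distr nn_integral_density)

lemma sets_lborel_pair_measure:
  "sets \<nu> = sets borel \<Longrightarrow> sets (lborel \<Otimes>\<^sub>M \<nu>) = sets (borel \<Otimes>\<^sub>M borel)"
  by (rule sets_pair_measure_cong) simp_all

definition upsilon_measure :: "'a::euclidean_space measure \<Rightarrow> 'a measure" where
  "upsilon_measure \<nu> =
     distr (density (lborel \<Otimes>\<^sub>M \<nu>) (\<lambda>(s, x). upsilon_weight s)) borel (\<lambda>(s, x). s *\<^sub>R x)"

lemma sets_upsilon_measure [simp]: "sets (upsilon_measure \<nu>) = sets borel"
  by (simp add: upsilon_measure_def)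

lemma nn_integral_upsilon_measure_pair:
  fixes \<nu> :: "'a::euclidean_space measure"
  assumes sets: "sets \<nu> = sets borel" and [measurable]: "f \<in> borel_measurable borel"
  shows "(\<integral>\<^sup>+ y. f y \<partial>upsilon_measure \<nu>) =
    (\<integral>\<^sup>+ p. upsilon_weight (fst p) * f (fst p *\<^sub>R snd p) \<partial>(lborel \<Otimes>\<^sub>M \<nu>))"
proof -
  note sets_pair = sets_lborel_pair_measure[OF sets]
  show ?thesis
    unfolding upsilon_measure_def
    by (subst nn_integral_distr_density)
      (simp_all add: measurable_cong_sets[OF sets_pair refl] case_prod_beta)
qed

lemma nn_integral_upsilon_measure:
  fixes \<nu> :: "'a::euclidean_space measure"
  assumes "sigma_finite_measure \<nu>" and sets: "sets \<nu> = sets borel" and [measurable]: "f \<in> borel_measurable borel"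
  shows "(\<integral>\<^sup>+ y. f y \<partial>upsilon_measure \<nu>) = (\<integral>\<^sup>+ x. \<integral>\<^sup>+ s. upsilon_weight s * f (s *\<^sub>R x) \<partial>lborel \<partial>\<nu>)"
proof -
  interpret sigma_finite_measure \<nu> by fact
  interpret pair_sigma_finite lborel \<nu> ..
  note sets_pair = sets_lborel_pair_measure[OF sets]
  have "(\<lambda>p. upsilon_weight (fst p) * f (fst p *\<^sub>R snd p)) \<in> borel_measurable (lborel \<Otimes>\<^sub>M \<nu>)"
    unfolding measurable_cong_sets[OF sets_pair refl] by measurable
  from nn_integral_snd[OF this] show ?thesis
    by (simp add: nn_integral_upsilon_measure_pair[OF sets])
qed

lemma emeasure_upsilon_measure:
  fixes \<nu> :: "'a::euclidean_space measure"
  assumes "sigma_finite_measure \<nu>" and sets: "sets \<nu> = sets borel" and B: "B \<in> sets borel"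
  shows "emeasure (upsilon_measure \<nu>) B = upsilon \<nu> B"
proof -
  interpret sigma_finite_measure \<nu> by fact
  note sets_pair = sets_lborel_pair_measure[OF sets]
  have "(\<lambda>p. upsilon_weight (fst p) * indicator B (fst p *\<^sub>R snd p)) \<in> borel_measurable (lborel \<Otimes>\<^sub>M \<nu>)"
    unfolding measurable_cong_sets[OF sets_pair refl] using B by measurable
  from nn_integral_fst[OF this]
  have "emeasure (upsilon_measure \<nu>) B =
      (\<integral>\<^sup>+ s. \<integral>\<^sup>+ x. upsilon_weight s * indicator B (s *\<^sub>R x) \<partial>\<nu> \<partial>lborel)"
    using B by (simp add: nn_integral_upsilon_measure_pair[OF sets] flip: nn_integral_indicator)
  also have "\<dots> = upsilon \<nu> B"
    unfolding upsilon_def by (simp add: upsilon_integrand_eq_nn_integral[OF sets B])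
  finally show ?thesis .
qed

section \<open>Definability\<close>

lemma min_one_norm_scaleR_le:
  fixes x :: "'a::real_normed_vector"
  shows "min 1 ((norm (s *\<^sub>R x))\<^sup>2) \<le> (1 + s\<^sup>2) * min 1 ((norm x)\<^sup>2)"
proof (cases "(norm x)\<^sup>2 \<le> 1")
  case True
  have "min 1 ((norm (s *\<^sub>R x))\<^sup>2) \<le> s\<^sup>2 * (norm x)\<^sup>2"
    by (simp add: power_mult_distrib)
  also have "\<dots> \<le> (1 + s\<^sup>2) * (norm x)\<^sup>2"
    by (simp add: distrib_right)
  finally show ?thesis
    using True by simp
next
  case False
  have "min 1 ((norm (s *\<^sub>R x))\<^sup>2) \<le> 1 + s\<^sup>2"
    by (simp add: min.coboundedI1)
  then show ?thesis
    using False by simp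
qed

lemma min_one_norm_le_scaleR:
  fixes x :: "'a::real_normed_vector"
  assumes "1 \<le> \<bar>s\<bar>"
  shows "min 1 ((norm x)\<^sup>2) \<le> min 1 ((norm (s *\<^sub>R x))\<^sup>2)"
proof -
  have "1 \<le> s\<^sup>2" using one_le_power[OF assms, of 2] by simp
  then have "(norm x)\<^sup>2 \<le> s\<^sup>2 * (norm x)\<^sup>2" by (simp add: mult_le_cancel_right1)
  then show ?thesis by (auto simp: power_mult_distrib)
qed

lemma levy_measure_upsilon_measure:
  fixes \<nu> :: "'a::euclidean_space measure"
  assumes "levy_measure \<nu>" and "sigma_finite_measure \<nu>"
  shows "levy_measure (upsilon_measure \<nu>)"
proof -
  have sets: "sets \<nu> = sets borel" and zero: "emeasure \<nu> {0} = 0"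
    and finite: "(\<integral>\<^sup>+ x. ennreal (min 1 ((norm x)\<^sup>2)) \<partial>\<nu>) < \<infinity>"
    using assms(1) by (auto simp: levy_measure_def)
  have "emeasure (upsilon_measure \<nu>) {0} = upsilon \<nu> {0}"
    by (simp add: emeasure_upsilon_measure[OF assms(2) sets])
  also have "\<dots> = 0"
    by (simp add: upsilon_def zero)
  finally have zero': "emeasure (upsilon_measure \<nu>) {0} = 0" .
  have "(\<integral>\<^sup>+ y. ennreal (min 1 ((norm y)\<^sup>2)) \<partial>upsilon_measure \<nu>) =
      (\<integral>\<^sup>+ x. \<integral>\<^sup>+ s. upsilon_weight s * ennreal (min 1 ((norm (s *\<^sub>R x))\<^sup>2)) \<partial>lborel \<partial>\<nu>)"
    by (rule nn_integral_upsilon_measure[OF assms(2) sets]) measurable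
  also have "\<dots> \<le> (\<integral>\<^sup>+ x. \<integral>\<^sup>+ s. upsilon_weight s * ennreal (1 + s\<^sup>2) * ennreal (min 1 ((norm x)\<^sup>2)) \<partial>lborel \<partial>\<nu>)"
  proof (intro nn_integral_mono)
    fix x :: 'a and s :: real
    have "ennreal (min 1 ((norm (s *\<^sub>R x))\<^sup>2)) \<le> ennreal (1 + s\<^sup>2) * ennreal (min 1 ((norm x)\<^sup>2))"
      using min_one_norm_scaleR_le[of s x] by (subst ennreal_mult[symmetric]) (auto intro: ennreal_leI)
    then show "upsilon_weight s * ennreal (min 1 ((norm (s *\<^sub>R x))\<^sup>2)) \<le>
        upsilon_weight s * ennreal (1 + s\<^sup>2) * ennreal (min 1 ((norm x)\<^sup>2))"
      unfolding mult.assoc by (rule mult_left_mono) simp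
  qed
  also have "\<dots> = (\<integral>\<^sup>+ x. 2 * ennreal (min 1 ((norm x)\<^sup>2)) \<partial>\<nu>)"
    by (simp add: nn_integral_multc nn_integral_upsilon_weight_second_moment del: ennreal_plus)
  also have "\<dots> = 2 * (\<integral>\<^sup>+ x. ennreal (min 1 ((norm x)\<^sup>2)) \<partial>\<nu>)"
    by (rule nn_integral_cmult) (simp add: measurable_cong_sets[OF sets refl])
  also have "\<dots> < \<infinity>"
    using finite by (simp add: ennreal_mult_less_top)
  finally show ?thesis
    using zero' by (simp add: levy_measure_def)
qed

lemma nn_integral_min_one_norm_le_upsilon_measure:
  fixes \<nu> :: "'a::euclidean_space measure"
  assumes "sigma_finite_measure \<nu>" and sets: "sets \<nu> = sets borel"
  shows "ennreal (exp (- 1)) * (\<integral>\<^sup>+ x. ennreal (min 1 ((norm x)\<^sup>2)) \<partial>\<nu>) \<le>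
    (\<integral>\<^sup>+ y. ennreal (min 1 ((norm y)\<^sup>2)) \<partial>upsilon_measure \<nu>)"
proof -
  have "ennreal (exp (- 1)) * (\<integral>\<^sup>+ x. ennreal (min 1 ((norm x)\<^sup>2)) \<partial>\<nu>) =
      (\<integral>\<^sup>+ x. \<integral>\<^sup>+ s. upsilon_weight s * indicator {1<..} s * ennreal (min 1 ((norm x)\<^sup>2)) \<partial>lborel \<partial>\<nu>)"
    by (subst nn_integral_cmult[symmetric])
      (simp_all add: measurable_cong_sets[OF sets refl] nn_integral_multc nn_integral_upsilon_weight_tail)
  also have "\<dots> \<le> (\<integral>\<^sup>+ x. \<integral>\<^sup>+ s. upsilon_weight s * ennreal (min 1 ((norm (s *\<^sub>R x))\<^sup>2)) \<partial>lborel \<partial>\<nu>)"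
  proof (intro nn_integral_mono)
    fix x :: 'a and s :: real
    have "indicator {1<..} s * ennreal (min 1 ((norm x)\<^sup>2)) \<le> ennreal (min 1 ((norm (s *\<^sub>R x))\<^sup>2))"
      using min_one_norm_le_scaleR[of s x] by (auto intro: ennreal_leI split: split_indicator)
    then show "upsilon_weight s * indicator {1<..} s * ennreal (min 1 ((norm x)\<^sup>2)) \<le>
        upsilon_weight s * ennreal (min 1 ((norm (s *\<^sub>R x))\<^sup>2))"
      unfolding mult.assoc by (rule mult_left_mono) simp
  qed
  also have "\<dots> = (\<integral>\<^sup>+ y. ennreal (min 1 ((norm y)\<^sup>2)) \<partial>upsilon_measure \<nu>)"
    by (rule nn_integral_upsilon_measure[OF assms, symmetric]) measurable
  finally show ?thesis .
qed

lemma emeasure_norm_greater_le_upsilon: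
  fixes \<nu> :: "'a::euclidean_space measure"
  assumes sets: "sets \<nu> = sets borel" and "0 < r"
  shows "emeasure \<nu> {x. r < norm x} * ennreal (exp (- ((1 / r)\<^sup>2))) \<le> upsilon \<nu> {y. 1 < norm y}"
proof -
  let ?A = "{x::'a. r < norm x}" and ?B = "{y::'a. 1 < norm y}"
  have A: "?A \<in> sets \<nu>" and B: "?B \<in> sets borel"
    unfolding sets by measurable
  have "emeasure \<nu> ?A * ennreal (exp (- ((1 / r)\<^sup>2))) =
      (\<integral>\<^sup>+ s. upsilon_weight s * indicator {1 / r<..} s \<partial>lborel) * emeasure \<nu> ?A"
    using assms(2) by (simp add: nn_integral_upsilon_weight_tail mult.commute)
  also have "\<dots> = (\<integral>\<^sup>+ s. \<integral>\<^sup>+ x. upsilon_weight s * indicator {1 / r<..} s * indicator ?A x \<partial>\<nu> \<partial>lborel)"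
    by (simp add: nn_integral_multc nn_integral_cmult_indicator[OF A])
  also have "\<dots> \<le> (\<integral>\<^sup>+ s. \<integral>\<^sup>+ x. upsilon_weight s * indicator ?B (s *\<^sub>R x) \<partial>\<nu> \<partial>lborel)"
  proof (intro nn_integral_mono)
    fix s :: real and x :: 'a
    have "1 < norm (s *\<^sub>R x)" if "1 / r < s" "r < norm x"
    proof -
      have s: "0 < s"
        using less_trans[OF divide_pos_pos[OF zero_less_one assms(2)] that(1)] .
      have "1 < s * r" using that(1) assms(2) by (simp add: field_simps)
      also have "\<dots> \<le> s * norm x" using that(2) s by simp
      finally show ?thesis using s by simp
    qed
    then show "upsilon_weight s * indicator {1 / r<..} s * indicator ?A x \<le>
        upsilon_weight s * indicator ?B (s *\<^sub>R x)"
      by (auto split: split_indicator)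
  qed
  also have "\<dots> = upsilon \<nu> ?B"
    unfolding upsilon_def by (simp add: upsilon_integrand_eq_nn_integral[OF sets B])
  finally show ?thesis .
qed

lemma sigma_finite_if_norm_tails_finite:
  fixes \<nu> :: "'a::euclidean_space measure"
  assumes sets: "sets \<nu> = sets borel" and "emeasure \<nu> {0} = 0"
    and "\<And>r. 0 < r \<Longrightarrow> emeasure \<nu> {x. r < norm x} \<noteq> \<infinity>"
  shows "sigma_finite_measure \<nu>"
proof
  let ?A = "insert {0} (range (\<lambda>n::nat. {x::'a. 1 / Suc n < norm x}))"
  have "x \<in> \<Union> ?A" for x :: 'a
  proof (cases "x = 0")
    case False
    then obtain n where "1 / Suc n < norm x"
      using nat_approx_posE[of "norm x"] by auto
    then show ?thesis by auto
  qed simp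
  then have "\<Union> ?A = space \<nu>"
    using sets_eq_imp_space_eq[OF sets] by auto
  then show "\<exists>A. countable A \<and> A \<subseteq> sets \<nu> \<and> \<Union> A = space \<nu> \<and> (\<forall>a\<in>A. emeasure \<nu> a \<noteq> \<infinity>)"
    using assms by (intro exI[of _ ?A]) auto
qed

lemma levy_measure_norm_tail_finite:
  fixes \<nu> :: "'a::euclidean_space measure"
  assumes "levy_measure \<nu>" and "0 < r"
  shows "emeasure \<nu> {x. r < norm x} \<noteq> \<infinity>"
proof -
  have sets: "sets \<nu> = sets borel"
    and finite: "(\<integral>\<^sup>+ x. ennreal (min 1 ((norm x)\<^sup>2)) \<partial>\<nu>) < \<infinity>"
    using assms(1) by (auto simp: levy_measure_def)
  have A: "{x. r < norm x} \<in> sets \<nu>"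
    unfolding sets by measurable
  have "ennreal (min 1 (r\<^sup>2)) * emeasure \<nu> {x. r < norm x} =
      (\<integral>\<^sup>+ x. ennreal (min 1 (r\<^sup>2)) * indicator {x. r < norm x} x \<partial>\<nu>)"
    by (simp add: nn_integral_cmult_indicator[OF A])
  also have "\<dots> \<le> (\<integral>\<^sup>+ x. ennreal (min 1 ((norm x)\<^sup>2)) \<partial>\<nu>)"
  proof (intro nn_integral_mono)
    fix x :: 'a
    have "min 1 (r\<^sup>2) \<le> (norm x)\<^sup>2" if "r < norm x"
      using that assms(2) by (intro min.coboundedI2 power_mono) auto
    then show "ennreal (min 1 (r\<^sup>2)) * indicator {x. r < norm x} x \<le> ennreal (min 1 ((norm x)\<^sup>2))"
      by (auto intro: ennreal_leI split: split_indicator)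
  qed
  finally have "ennreal (min 1 (r\<^sup>2)) * emeasure \<nu> {x. r < norm x} < \<infinity>"
    using finite by order
  then show ?thesis
    using assms(2) by (auto simp: ennreal_mult_less_top min_def split: if_splits)
qed

lemma levy_measure_sigma_finite:
  assumes "levy_measure \<nu>"
  shows "sigma_finite_measure \<nu>"
  using assms levy_measure_norm_tail_finite[OF assms]
  by (intro sigma_finite_if_norm_tails_finite) (auto simp: levy_measure_def)

lemma upsilon_definable_iff_levy_measure:
  fixes \<nu> :: "'a::euclidean_space measure"
  assumes sets: "sets \<nu> = sets borel" and zero: "emeasure \<nu> {0} = 0"
  shows "upsilon_definable \<nu> \<longleftrightarrow> levy_measure \<nu>"
proof
  assume "levy_measure \<nu>"
  then show "upsilon_definable \<nu>"
    unfolding upsilon_definable_def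
    using levy_measure_upsilon_measure levy_measure_sigma_finite emeasure_upsilon_measure sets
    by blast
next
  assume "upsilon_definable \<nu>"
  then obtain \<mu> where \<mu>: "levy_measure \<mu>" and eq: "\<And>B. B \<in> sets borel \<Longrightarrow> emeasure \<mu> B = upsilon \<nu> B"
    unfolding upsilon_definable_def by blast
  have "upsilon \<nu> {y. 1 < norm y} \<noteq> \<infinity>"
    using levy_measure_norm_tail_finite[OF \<mu>, of 1] eq[of "{y. 1 < norm y}"] by simp
  then have "emeasure \<nu> {x. r < norm x} \<noteq> \<infinity>" if "0 < r" for r
    using emeasure_norm_greater_le_upsilon[OF sets that]
    by (auto simp: ennreal_mult_eq_top_iff top_unique)
  then have sf: "sigma_finite_measure \<nu>"
    using sigma_finite_if_norm_tails_finite[OF sets zero] by blast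
  have "\<mu> = upsilon_measure \<nu>"
    using \<mu> by (intro measure_eqI) (auto simp: levy_measure_def eq emeasure_upsilon_measure[OF sf sets])
  then have "(\<integral>\<^sup>+ y. ennreal (min 1 ((norm y)\<^sup>2)) \<partial>upsilon_measure \<nu>) < \<infinity>"
    using \<mu> by (simp add: levy_measure_def)
  then have "ennreal (exp (- 1)) * (\<integral>\<^sup>+ x. ennreal (min 1 ((norm x)\<^sup>2)) \<partial>\<nu>) < \<infinity>"
    using nn_integral_min_one_norm_le_upsilon_measure[OF sf sets] by order
  then show "levy_measure \<nu>"
    using sets zero by (auto simp: levy_measure_def ennreal_mult_less_top)
qed

section \<open>Finite measures on the unit interval are determined by their moments\<close>

lemma finite_borel_measure_eqI_integral_continuous:
  assumes M: "finite_borel_measure M" and N: "finite_borel_measure N"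
    and integral_eq: "\<And>f :: real \<Rightarrow> real. continuous_on UNIV f \<Longrightarrow> bounded (range f) \<Longrightarrow> (\<integral>y. f y \<partial>M) = (\<integral>y. f y \<partial>N)"
  shows "M = N"
proof (rule cdf_unique'[OF M N], rule ext)
  fix a :: real
  define ramp where "ramp n y = max 0 (min 1 (1 - real n * (y - a)))" for n :: nat and y
  have continuous: "continuous_on UNIV (ramp n)" for n
    unfolding ramp_def by (intro continuous_intros)
  have bounded: "bounded (range (ramp n))" for n
    by (intro boundedI[of _ 1]) (auto simp: ramp_def)
  have ramp_limit: "(\<lambda>n. ramp n y) \<longlonglongrightarrow> indicator {..a} y" for y
  proof (cases "y \<le> a")
    case True
    then show ?thesis by (simp add: ramp_def mult_nonneg_nonpos)
  next
    case False
    then obtain N :: nat where N: "1 / (y - a) \<le> real N"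
      using real_arch_simple by blast
    have "ramp n y = 0" if "N \<le> n" for n
    proof -
      have "1 \<le> real N * (y - a)" using N False by (simp add: field_simps)
      also have "\<dots> \<le> real n * (y - a)" using that False by (intro mult_right_mono) auto
      finally show ?thesis by (simp add: ramp_def)
    qed
    then show ?thesis
      using False by (auto intro: tendsto_eventually eventually_sequentiallyI)
  qed
  have ramp_integral_limit: "(\<lambda>n. \<integral>y. ramp n y \<partial>P) \<longlonglongrightarrow> cdf P a" if P: "finite_borel_measure P" for P
  proof -
    interpret finite_borel_measure P by (fact P)
    have "(\<lambda>n. \<integral>y. ramp n y \<partial>P) \<longlonglongrightarrow> (\<integral>y. indicator {..a} y \<partial>P)"
    proof (rule integral_dominated_convergence[where w = "\<lambda>_. 1"])
      show "AE y in P. norm (ramp n y) \<le> 1" for n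
        by (auto simp: ramp_def)
    qed (auto simp: measurable_cong_sets[OF M_is_borel refl] ramp_limit
        borel_measurable_continuous_onI[OF continuous])
    then show ?thesis
      by (simp add: cdf_def2 sets_eq_imp_space_eq[OF M_is_borel])
  qed
  show "cdf M a = cdf N a"
    using ramp_integral_limit[OF M] ramp_integral_limit[OF N] integral_eq[OF continuous bounded]
    by (auto intro: LIMSEQ_unique)
qed

lemma integrable_if_bounded_on_AE_set:
  fixes g :: "'a \<Rightarrow> real"
  assumes "finite_measure M" and "AE x in M. x \<in> S" and "g \<in> borel_measurable M"
    and "\<And>x. x \<in> S \<Longrightarrow> \<bar>g x\<bar> \<le> B"
  shows "integrable M g"
  using assms(2) by (intro finite_measure.integrable_const_bound[OF assms(1), where B = B] assms(3))
    (auto elim!: eventually_mono simp: assms(4))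

lemma abs_integral_diff_le_if_close_on_AE_set:
  fixes f g :: "'a \<Rightarrow> real"
  assumes "finite_measure M" and "AE x in M. x \<in> S" and "integrable M f" "integrable M g"
    and "\<And>x. x \<in> S \<Longrightarrow> \<bar>f x - g x\<bar> \<le> e"
  shows "\<bar>(\<integral>x. f x \<partial>M) - (\<integral>x. g x \<partial>M)\<bar> \<le> e * measure M (space M)"
proof -
  have "\<bar>(\<integral>x. f x \<partial>M) - (\<integral>x. g x \<partial>M)\<bar> = norm (\<integral>x. f x - g x \<partial>M)"
    using assms(3,4) by simp
  also have "\<dots> \<le> (\<integral>x. norm (f x - g x) \<partial>M)"
    by (rule integral_norm_bound)
  also have "\<dots> \<le> (\<integral>x. e \<partial>M)"
    using assms(2) by (intro integral_mono_AE Bochner_Integration.integrable_diff integrable_norm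
        finite_measure.integrable_const assms(1,3,4)) (auto elim!: eventually_mono simp: assms(5))
  finally show ?thesis
    by (simp add: mult.commute)
qed

lemma integral_polynomial_eq_if_moments_eq:
  fixes M N :: "real measure"
  assumes M: "finite_borel_measure M" and N: "finite_borel_measure N"
    and M01: "AE y in M. y \<in> {0..1}" and N01: "AE y in N. y \<in> {0..1}"
    and moments: "\<And>k. (\<integral>\<^sup>+ y. ennreal (y ^ k) \<partial>M) = (\<integral>\<^sup>+ y. ennreal (y ^ k) \<partial>N)"
  shows "(\<integral>y. (\<Sum>i\<le>n. c i * y ^ i) \<partial>M) = (\<integral>y. (\<Sum>i\<le>n. c i * y ^ i) \<partial>N)"
proof -
  have integral_polynomial: "(\<integral>y. (\<Sum>i\<le>n. c i * y ^ i) \<partial>P) =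
      (\<Sum>i\<le>n. c i * enn2real (\<integral>\<^sup>+ y. ennreal (y ^ i) \<partial>P))"
    if P: "finite_borel_measure P" and P01: "AE y in P. y \<in> {0..1}" for P
  proof -
    interpret finite_borel_measure P by (fact P)
    have power_measurable: "(\<lambda>y. y ^ k) \<in> borel_measurable P" for k :: nat
      by (simp add: measurable_cong_sets[OF M_is_borel refl])
    have "integrable P (\<lambda>y. y ^ k)" for k :: nat
      by (rule integrable_if_bounded_on_AE_set[OF finite_measure_axioms P01 power_measurable, where B = 1])
        (simp add: power_le_one abs_le_iff)
    moreover have "(\<integral>y. y ^ k \<partial>P) = enn2real (\<integral>\<^sup>+ y. ennreal (y ^ k) \<partial>P)" for k :: nat
      using P01 by (intro integral_eq_nn_integral power_measurable) (auto elim!: eventually_mono)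
    ultimately show ?thesis
      by simp
  qed
  show ?thesis
    using integral_polynomial[OF M M01] integral_polynomial[OF N N01] moments by simp
qed

lemma abs_integral_diff_le_if_close_on_unit_interval:
  fixes f g :: "real \<Rightarrow> real"
  assumes P: "finite_borel_measure P" and P01: "AE y in P. y \<in> {0..1}"
    and continuous: "continuous_on UNIV f" and B: "\<And>y. \<bar>f y\<bar> \<le> B"
    and approx: "\<And>y. y \<in> {0..1} \<Longrightarrow> \<bar>f y - g y\<bar> \<le> e" and "g \<in> borel_measurable borel"
  shows "\<bar>(\<integral>y. f y \<partial>P) - (\<integral>y. g y \<partial>P)\<bar> \<le> e * measure P (space P)"
proof -
  interpret finite_borel_measure P by (fact P)
  have int_f: "integrable P f"
    using B by (intro integrable_const_bound[where B = B])
      (simp_all add: measurable_cong_sets[OF M_is_borel refl] borel_measurable_continuous_onI[OF continuous])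
  have "\<bar>g y\<bar> \<le> B + e" if "y \<in> {0..1}" for y
    using approx[OF that] B[of y] by linarith
  then have int_g: "integrable P g"
    using assms(6)
    by (intro integrable_if_bounded_on_AE_set[OF finite_measure_axioms P01, where B = "B + e"])
      (simp_all add: measurable_cong_sets[OF M_is_borel refl])
  show ?thesis
    using approx by (rule abs_integral_diff_le_if_close_on_AE_set[OF finite_measure_axioms P01 int_f int_g])
qed

lemma finite_borel_measure_eq_if_moments_eq:
  fixes M N :: "real measure"
  assumes M: "finite_borel_measure M" and N: "finite_borel_measure N"
    and M01: "AE y in M. y \<in> {0..1}" and N01: "AE y in N. y \<in> {0..1}"
    and moments: "\<And>k. (\<integral>\<^sup>+ y. ennreal (y ^ k) \<partial>M) = (\<integral>\<^sup>+ y. ennreal (y ^ k) \<partial>N)"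
  shows "M = N"
proof (rule finite_borel_measure_eqI_integral_continuous[OF M N])
  fix f :: "real \<Rightarrow> real"
  assume continuous: "continuous_on UNIV f" and "bounded (range f)"
  then obtain B where B: "\<And>y. \<bar>f y\<bar> \<le> B"
    by (auto simp: bounded_iff)
  let ?C = "measure M (space M) + measure N (space N)"
  have bound: "\<bar>(\<integral>y. f y \<partial>M) - (\<integral>y. f y \<partial>N)\<bar> \<le> e * ?C" if e: "0 < e" for e
  proof -
    obtain g where "real_polynomial_function g" and approx: "\<And>y. y \<in> {0..1} \<Longrightarrow> \<bar>f y - g y\<bar> < e"
      using Stone_Weierstrass_real_polynomial_function[of "{0..1}" f e] continuous e
      by (auto intro: continuous_on_subset)
    then obtain c n where g_eq: "g = (\<lambda>y. \<Sum>i\<le>n. c i * y ^ i)"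
      by (auto simp: real_polynomial_function_iff_sum)
    have "g \<in> borel_measurable borel"
      unfolding g_eq by measurable
    note close = abs_integral_diff_le_if_close_on_unit_interval[OF _ _ continuous B approx[THEN less_imp_le] this]
    have "(\<integral>y. g y \<partial>M) = (\<integral>y. g y \<partial>N)"
      unfolding g_eq by (rule integral_polynomial_eq_if_moments_eq[OF M N M01 N01 moments])
    then show ?thesis
      using close[OF M M01] close[OF N N01] by (simp add: distrib_left)
  qed
  have "\<bar>(\<integral>y. f y \<partial>M) - (\<integral>y. f y \<partial>N)\<bar> \<le> 0"
  proof (rule field_le_epsilon)
    fix e :: real
    assume "0 < e"
    moreover have "0 \<le> ?C" by simp
    ultimately have "e / (?C + 1) * ?C \<le> e / (?C + 1) * (?C + 1)"
      by (intro mult_left_mono) auto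
    also have "\<dots> = e"
      using \<open>0 \<le> ?C\<close> by (simp, linarith)
    finally have "e / (?C + 1) * ?C \<le> e" .
    then show "\<bar>(\<integral>y. f y \<partial>M) - (\<integral>y. f y \<partial>N)\<bar> \<le> 0 + e"
      using bound[of "e / (?C + 1)"] \<open>0 < e\<close> \<open>0 \<le> ?C\<close> by simp
  qed
  then show "(\<integral>y. f y \<partial>M) = (\<integral>y. f y \<partial>N)"
    by simp
qed

section \<open>Injectivity\<close>

text \<open>At \<open>x = 0\<close> the junk value \<open>1 / 0 = 0\<close> makes the weight \<open>1\<close>; this is harmless since
  Levy measures do not charge the origin.\<close>
definition radial_weight :: "'a::real_normed_vector \<Rightarrow> real" where
  "radial_weight x = exp (- (1 / (norm x)\<^sup>2))"

definition cone_over :: "'a::real_normed_vector set \<Rightarrow> 'a set" where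
  "cone_over D = {x. x \<noteq> 0 \<and> sgn x \<in> D}"

lemma radial_weight_measurable [measurable]:
  "(radial_weight :: 'a::euclidean_space \<Rightarrow> real) \<in> borel_measurable borel"
  unfolding radial_weight_def by measurable

lemma cone_over_measurable [measurable]:
  fixes D :: "'a::euclidean_space set"
  assumes "D \<in> sets borel"
  shows "cone_over D \<in> sets borel"
proof -
  have "cone_over D = sgn -` D - {0}"
    by (auto simp: cone_over_def)
  then show ?thesis
    using measurable_sets_borel[OF borel_measurable_sgn assms] by simp
qed

lemma radial_weight_pos: "0 < radial_weight x"
  by (simp add: radial_weight_def)

lemma radial_weight_le_one: "radial_weight x \<le> 1"
  by (simp add: radial_weight_def)

lemma radial_weight_le_min_one_norm:
  assumes "x \<noteq> 0"
  shows "radial_weight x \<le> min 1 ((norm x)\<^sup>2)"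
proof -
  let ?u = "1 / (norm x)\<^sup>2"
  have "0 < ?u" using assms by simp
  moreover have "?u < exp ?u"
    using exp_ge_add_one_self[of ?u] by linarith
  ultimately have "1 / exp ?u < 1 / ?u"
    by (intro divide_strict_left_mono) auto
  then show ?thesis
    using assms radial_weight_le_one[of x] by (simp add: radial_weight_def exp_minus inverse_eq_divide)
qed

lemma radial_weight_power: "radial_weight x ^ k = exp (- (real k / (norm x)\<^sup>2))"
  unfolding radial_weight_def exp_of_nat_mult[symmetric] by simp

lemma upsilon_cone_over_norm_greater:
  fixes \<nu> :: "'a::euclidean_space measure"
  assumes "sigma_finite_measure \<nu>" and sets: "sets \<nu> = sets borel" and D: "D \<in> sets borel"
    and r: "0 < r"
  shows "upsilon \<nu> (cone_over D \<inter> {y. r < norm y}) =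
    (\<integral>\<^sup>+ x. indicator (cone_over D) x * ennreal (exp (- (r\<^sup>2 / (norm x)\<^sup>2))) \<partial>\<nu>)"
proof -
  let ?B = "cone_over D \<inter> {y. r < norm y}"
  have B: "?B \<in> sets borel"
    using D by measurable
  have inner: "(\<integral>\<^sup>+ s. upsilon_weight s * indicator ?B (s *\<^sub>R x) \<partial>lborel) =
      indicator (cone_over D) x * ennreal (exp (- (r\<^sup>2 / (norm x)\<^sup>2)))" for x :: 'a
  proof (cases "x \<in> cone_over D")
    case True
    then have "x \<noteq> 0" by (simp add: cone_over_def)
    have "upsilon_weight s * indicator ?B (s *\<^sub>R x) = upsilon_weight s * indicator {r / norm x<..} s" for s
      using True \<open>x \<noteq> 0\<close>
      by (cases "0 < s") (auto simp: upsilon_weight_def cone_over_def sgn_scaleR field_simps split: split_indicator)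
    then have "(\<integral>\<^sup>+ s. upsilon_weight s * indicator ?B (s *\<^sub>R x) \<partial>lborel) = ennreal (exp (- ((r / norm x)\<^sup>2)))"
      using r by (simp add: nn_integral_upsilon_weight_tail)
    then show ?thesis
      using True by (simp add: power_divide)
  next
    case False
    have vanish: "upsilon_weight s * indicator ?B (s *\<^sub>R x) = 0" for s
      using False by (cases "0 < s") (auto simp: upsilon_weight_def cone_over_def sgn_scaleR)
    show ?thesis
      using False by (simp add: vanish)
  qed
  have "upsilon \<nu> ?B = (\<integral>\<^sup>+ y. indicator ?B y \<partial>upsilon_measure \<nu>)"
    using B by (simp add: emeasure_upsilon_measure[OF assms(1) sets B, symmetric])
  also have "\<dots> = (\<integral>\<^sup>+ x. \<integral>\<^sup>+ s. upsilon_weight s * indicator ?B (s *\<^sub>R x) \<partial>lborel \<partial>\<nu>)"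
    using B by (intro nn_integral_upsilon_measure[OF assms(1) sets]) simp
  finally show ?thesis
    by (simp add: inner)
qed

definition radial_distr :: "'a::euclidean_space measure \<Rightarrow> 'a set \<Rightarrow> real measure" where
  "radial_distr \<nu> D =
     distr (density \<nu> (\<lambda>x. indicator (cone_over D) x * ennreal (radial_weight x))) borel radial_weight"

lemma nn_integral_radial_distr:
  fixes \<nu> :: "'a::euclidean_space measure"
  assumes sets: "sets \<nu> = sets borel" and "D \<in> sets borel" and "h \<in> borel_measurable borel"
  shows "(\<integral>\<^sup>+ y. h y \<partial>radial_distr \<nu> D) =
    (\<integral>\<^sup>+ x. indicator (cone_over D) x * ennreal (radial_weight x) * h (radial_weight x) \<partial>\<nu>)"
  unfolding radial_distr_def
  using assms by (intro nn_integral_distr_density) (simp_all add: measurable_cong_sets[OF sets refl])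

lemma nn_integral_power_radial_distr:
  fixes \<nu> :: "'a::euclidean_space measure"
  assumes "sigma_finite_measure \<nu>" and sets: "sets \<nu> = sets borel" and D: "D \<in> sets borel"
  shows "(\<integral>\<^sup>+ y. ennreal (y ^ k) \<partial>radial_distr \<nu> D) =
    upsilon \<nu> (cone_over D \<inter> {y. sqrt (real (Suc k)) < norm y})"
proof -
  have "ennreal (radial_weight x) * ennreal (radial_weight x ^ k) =
      ennreal (exp (- ((sqrt (real (Suc k)))\<^sup>2 / (norm x)\<^sup>2)))" for x :: 'a
    using radial_weight_pos[of x] radial_weight_power[of x "Suc k"]
    by (simp add: ennreal_mult[symmetric] del: of_nat_Suc)
  then have "(\<integral>\<^sup>+ y. ennreal (y ^ k) \<partial>radial_distr \<nu> D) =
      (\<integral>\<^sup>+ x. indicator (cone_over D) x * ennreal (exp (- ((sqrt (real (Suc k)))\<^sup>2 / (norm x)\<^sup>2))) \<partial>\<nu>)"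
    by (simp add: nn_integral_radial_distr[OF sets D] mult.assoc)
  also have "\<dots> = upsilon \<nu> (cone_over D \<inter> {y. sqrt (real (Suc k)) < norm y})"
    by (rule upsilon_cone_over_norm_greater[OF assms, symmetric]) simp
  finally show ?thesis .
qed

lemma finite_borel_measure_radial_distr:
  fixes \<nu> :: "'a::euclidean_space measure"
  assumes "levy_measure \<nu>" and D: "D \<in> sets borel"
  shows "finite_borel_measure (radial_distr \<nu> D)"
proof -
  have sets: "sets \<nu> = sets borel"
    and finite: "(\<integral>\<^sup>+ x. ennreal (min 1 ((norm x)\<^sup>2)) \<partial>\<nu>) < \<infinity>"
    using assms(1) by (auto simp: levy_measure_def)
  have "emeasure (radial_distr \<nu> D) UNIV =
      (\<integral>\<^sup>+ x. indicator (cone_over D) x * ennreal (radial_weight x) \<partial>\<nu>)"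
    using nn_integral_radial_distr[OF sets D, of "\<lambda>_. 1"] by (simp add: radial_distr_def)
  also have "\<dots> \<le> (\<integral>\<^sup>+ x. ennreal (min 1 ((norm x)\<^sup>2)) \<partial>\<nu>)"
    using radial_weight_le_min_one_norm
    by (intro nn_integral_mono) (auto simp: cone_over_def intro!: ennreal_leI split: split_indicator)
  finally have "emeasure (radial_distr \<nu> D) (space (radial_distr \<nu> D)) \<noteq> \<infinity>"
    using finite by (auto simp: radial_distr_def top_unique)
  then show ?thesis
    by (auto simp: finite_borel_measure_def finite_borel_measure_axioms_def radial_distr_def
        intro: finite_measureI)
qed

lemma AE_radial_distr_unit_interval:
  fixes \<nu> :: "'a::euclidean_space measure"
  assumes sets: "sets \<nu> = sets borel"
  shows "AE y in radial_distr \<nu> D. y \<in> {0..1}"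
  unfolding radial_distr_def
  by (subst AE_distr_iff)
    (auto simp: measurable_cong_sets[OF sets refl] radial_weight_le_one less_imp_le[OF radial_weight_pos])

lemma radial_distr_eq_if_upsilon_eq:
  fixes \<nu>1 \<nu>2 :: "'a::euclidean_space measure"
  assumes "levy_measure \<nu>1" and "levy_measure \<nu>2"
    and upsilon_eq: "\<forall>B\<in>sets borel. upsilon \<nu>1 B = upsilon \<nu>2 B" and D: "D \<in> sets borel"
  shows "radial_distr \<nu>1 D = radial_distr \<nu>2 D"
proof (rule finite_borel_measure_eq_if_moments_eq)
  show "finite_borel_measure (radial_distr \<nu>1 D)" "finite_borel_measure (radial_distr \<nu>2 D)"
    using assms(1,2) D by (simp_all add: finite_borel_measure_radial_distr)
  show "AE y in radial_distr \<nu>1 D. y \<in> {0..1}" "AE y in radial_distr \<nu>2 D. y \<in> {0..1}"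
    using assms(1,2) unfolding levy_measure_def by (blast intro: AE_radial_distr_unit_interval)+
  fix k
  have "cone_over D \<inter> {y::'a. sqrt (real (Suc k)) < norm y} \<in> sets borel"
    using D by measurable
  then show "(\<integral>\<^sup>+ y. ennreal (y ^ k) \<partial>radial_distr \<nu>1 D) = (\<integral>\<^sup>+ y. ennreal (y ^ k) \<partial>radial_distr \<nu>2 D)"
    using assms(1,2) upsilon_eq
    by (simp add: nn_integral_power_radial_distr levy_measure_sigma_finite D levy_measure_def)
qed

definition polar_distr :: "'a::euclidean_space measure \<Rightarrow> (real \<times> 'a) measure" where
  "polar_distr \<nu> =
     distr (density \<nu> (\<lambda>x. ennreal (radial_weight x))) (borel \<Otimes>\<^sub>M borel) (\<lambda>x. (radial_weight x, sgn x))"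

lemma nn_integral_polar_distr:
  fixes \<nu> :: "'a::euclidean_space measure"
  assumes sets: "sets \<nu> = sets borel" and "h \<in> borel_measurable (borel \<Otimes>\<^sub>M borel)"
  shows "(\<integral>\<^sup>+ p. h p \<partial>polar_distr \<nu>) = (\<integral>\<^sup>+ x. ennreal (radial_weight x) * h (radial_weight x, sgn x) \<partial>\<nu>)"
  unfolding polar_distr_def
  using assms by (intro nn_integral_distr_density) (simp_all add: measurable_cong_sets[OF sets refl])

lemma AE_neq_zero_if_emeasure_zero:
  fixes \<nu> :: "'a::euclidean_space measure"
  assumes "sets \<nu> = sets borel" and "emeasure \<nu> {0} = 0"
  shows "AE x in \<nu>. x \<noteq> 0"
  using assms by (intro AE_I[where N = "{0}"]) auto

lemma emeasure_polar_distr_Times: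
  fixes \<nu> :: "'a::euclidean_space measure"
  assumes sets: "sets \<nu> = sets borel" and zero: "emeasure \<nu> {0} = 0"
    and a: "a \<in> sets borel" and b: "b \<in> sets borel"
  shows "emeasure (polar_distr \<nu>) (a \<times> b) = emeasure (radial_distr \<nu> b) a"
proof -
  have ab: "a \<times> b \<in> sets (borel \<Otimes>\<^sub>M borel)"
    using a b by simp
  have "emeasure (polar_distr \<nu>) (a \<times> b) =
      (\<integral>\<^sup>+ x. ennreal (radial_weight x) * indicator (a \<times> b) (radial_weight x, sgn x) \<partial>\<nu>)"
    using ab by (simp add: polar_distr_def nn_integral_polar_distr[OF sets, symmetric])
  also have "\<dots> = (\<integral>\<^sup>+ x. indicator (cone_over b) x * ennreal (radial_weight x) * indicator a (radial_weight x) \<partial>\<nu>)"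
    by (intro nn_integral_cong_AE eventually_mono[OF AE_neq_zero_if_emeasure_zero[OF sets zero]])
      (auto simp: cone_over_def split: split_indicator)
  also have "\<dots> = emeasure (radial_distr \<nu> b) a"
    using a by (simp add: nn_integral_radial_distr[OF sets b, symmetric] radial_distr_def)
  finally show ?thesis .
qed

lemma polar_distr_eq_if_upsilon_eq:
  fixes \<nu>1 \<nu>2 :: "'a::euclidean_space measure"
  assumes L1: "levy_measure \<nu>1" and L2: "levy_measure \<nu>2"
    and upsilon_eq: "\<forall>B\<in>sets borel. upsilon \<nu>1 B = upsilon \<nu>2 B"
  shows "polar_distr \<nu>1 = polar_distr \<nu>2"
proof -
  have sets1: "sets \<nu>1 = sets borel" and zero1: "emeasure \<nu>1 {0} = 0"
    and sets2: "sets \<nu>2 = sets borel" and zero2: "emeasure \<nu>2 {0} = 0"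
    using L1 L2 by (auto simp: levy_measure_def)
  let ?E = "{a \<times> b | a b. a \<in> sets (borel :: real measure) \<and> b \<in> sets (borel :: 'a measure)}"
  show ?thesis
  proof (rule measure_eqI_generator_eq[where E = ?E and \<Omega> = "UNIV" and A = "\<lambda>_. UNIV"])
    show "Int_stable ?E"
      using Int_stable_pair_measure_generator[of borel borel] by simp
    show "sets (polar_distr \<nu>1) = sigma_sets UNIV ?E" "sets (polar_distr \<nu>2) = sigma_sets UNIV ?E"
      using sets_pair_measure[of "borel :: real measure" "borel :: 'a measure"] by (simp_all add: polar_distr_def)
    show "emeasure (polar_distr \<nu>1) X = emeasure (polar_distr \<nu>2) X" if "X \<in> ?E" for X
      using that
      by (auto simp: emeasure_polar_distr_Times[OF sets1 zero1] emeasure_polar_distr_Times[OF sets2 zero2]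
          radial_distr_eq_if_upsilon_eq[OF L1 L2 upsilon_eq])
    have "finite_measure (radial_distr \<nu>1 UNIV)"
      using finite_borel_measure_radial_distr[OF L1] by (simp add: finite_borel_measure_def)
    then show "emeasure (polar_distr \<nu>1) UNIV \<noteq> \<infinity>"
      using emeasure_polar_distr_Times[OF sets1 zero1, of UNIV UNIV]
      by (simp add: finite_measure.emeasure_finite)
  qed (auto intro!: exI[of _ UNIV])
qed

lemma radial_weight_inverse:
  assumes "x \<noteq> 0"
  shows "sqrt (- 1 / ln (radial_weight x)) = norm x"
  using assms by (simp add: radial_weight_def)

lemma emeasure_eq_nn_integral_polar_distr:
  fixes \<nu> :: "'a::euclidean_space measure"
  assumes sets: "sets \<nu> = sets borel" and zero: "emeasure \<nu> {0} = 0" and B: "B \<in> sets borel"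
  shows "emeasure \<nu> B =
    (\<integral>\<^sup>+ p. indicator B (sqrt (- 1 / ln (fst p)) *\<^sub>R snd p) * ennreal (1 / fst p) \<partial>polar_distr \<nu>)"
proof -
  have "emeasure \<nu> B = (\<integral>\<^sup>+ x. indicator B x \<partial>\<nu>)"
    using B sets by simp
  also have "\<dots> = (\<integral>\<^sup>+ x. ennreal (radial_weight x) *
      (indicator B (sqrt (- 1 / ln (radial_weight x)) *\<^sub>R sgn x) * ennreal (1 / radial_weight x)) \<partial>\<nu>)"
  proof (intro nn_integral_cong_AE, use AE_neq_zero_if_emeasure_zero[OF sets zero] in \<open>rule eventually_mono\<close>)
    fix x :: 'a
    assume "x \<noteq> 0"
    then have "sqrt (- 1 / ln (radial_weight x)) *\<^sub>R sgn x = x"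
      unfolding radial_weight_inverse[OF \<open>x \<noteq> 0\<close>] sgn_div_norm by simp
    moreover have "ennreal (radial_weight x) * ennreal (1 / radial_weight x) = 1"
      using radial_weight_pos[of x] by (simp add: ennreal_mult[symmetric])
    ultimately show "indicator B x = ennreal (radial_weight x) *
        (indicator B (sqrt (- 1 / ln (radial_weight x)) *\<^sub>R sgn x) * ennreal (1 / radial_weight x))"
      by (metis mult.left_commute mult_1_right)
  qed
  also have "\<dots> = (\<integral>\<^sup>+ p. indicator B (sqrt (- 1 / ln (fst p)) *\<^sub>R snd p) * ennreal (1 / fst p) \<partial>polar_distr \<nu>)"
    using B by (simp add: nn_integral_polar_distr[OF sets])
  finally show ?thesis .
qed

lemma upsilon_inj_on_levy_measures:
  fixes \<nu>1 \<nu>2 :: "'a::euclidean_space measure"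
  assumes L1: "levy_measure \<nu>1" and L2: "levy_measure \<nu>2"
    and upsilon_eq: "\<forall>B\<in>sets borel. upsilon \<nu>1 B = upsilon \<nu>2 B"
  shows "\<nu>1 = \<nu>2"
proof (rule measure_eqI)
  have sets1: "sets \<nu>1 = sets borel" and zero1: "emeasure \<nu>1 {0} = 0"
    and sets2: "sets \<nu>2 = sets borel" and zero2: "emeasure \<nu>2 {0} = 0"
    using L1 L2 by (auto simp: levy_measure_def)
  then show "sets \<nu>1 = sets \<nu>2"
    by simp
  show "emeasure \<nu>1 B = emeasure \<nu>2 B" if "B \<in> sets \<nu>1" for B
    using that sets1
    by (simp add: emeasure_eq_nn_integral_polar_distr[OF sets1 zero1] emeasure_eq_nn_integral_polar_distr[OF sets2 zero2]
        polar_distr_eq_if_upsilon_eq[OF L1 L2 upsilon_eq])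
qed

theorem proposition3p6:
  fixes \<nu> :: "'a::euclidean_space measure"
  assumes "sets \<nu> = sets borel" and "emeasure \<nu> {0} = 0"
  shows "(upsilon_definable \<nu> \<longleftrightarrow> levy_measure \<nu>) \<and>
    (\<forall>\<nu>1 \<nu>2 :: 'a measure. levy_measure \<nu>1 \<and> levy_measure \<nu>2 \<and>
        (\<forall>B\<in>sets borel. upsilon \<nu>1 B = upsilon \<nu>2 B) \<longrightarrow> \<nu>1 = \<nu>2)"
  using upsilon_definable_iff_levy_measure[OF assms] upsilon_inj_on_levy_measures by blast

end
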